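(* For every integer $n\ge 1$, the relation $\preceq_{\mathsf{MWC}}$ is a partial order on $\mathcal{G}_{\mathsf{cwvg}}(n)$, and the poset $(\mathcal{G}_{\mathsf{cwvg}}(n),\preceq_{\mathsf{MWC}})$ is graded with rank function $\rho:\mathcal{G}_{\mathsf{cwvg}}(n)\to\mathbb{N}$, $\rho(G)=|W_{\min,G}|$, where $W_{\min,G}$ is the set of minimal winning coalitions of $G$. Moreover, this poset has a least element, and its rank is $0$.
   Context: Let $N=\{1,\dots,n\}$. A simple game on $N$ is a function $v:2^N\to\{0,1\}$ (the game in which every coalition is losing is allowed); coalitions $S$ with $v(S)=1$ are winning, the others losing. A minimal winning coalition is a winning coalition $S$ such that $S\setminus\{i\}$ is losing for every $i\in S$. A simple game is a weighted voting game if there are $q\ge 0$ and $w_1,\dots,w_n\ge 0$ with $v(S)=1\iff\sum_{i\in S}w_i\ge q$ for all $S\subseteq N$; $[q;w_1,\dots,w_n]$ is then a weighted representation. For players $i,j$, write $i\succeq j$ if $v(S\cup\{i\})\ge v(S\cup\{j\})$ for all $S\subseteq N\setminus\{i,j\}$. A canonical weighted voting game on $N$ is a weighted voting game with $1\succeq 2\succeq\cdots\succeq n$; $\mathcal{G}_{\mathsf{cwvg}}(n)$ denotes the set of these. For $G,G'\in\mathcal{G}_{\mathsf{cwvg}}(n)$, $G\preceq_{\mathsf{MWC}}G'$ holds iff there is a sequence $G=G_1,\dots,G_k=G'$ ($k\ge1$) of games in $\mathcal{G}_{\mathsf{cwvg}}(n)$ such that for each $1\le i<k$, $W_{\min,G_i}\subset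 W_{\min,G_{i+1}}$ and $|W_{\min,G_{i+1}}|=|W_{\min,G_i}|+1$. A poset $(S,\preceq)$ is graded with rank function $\rho:S\to\mathbb{N}$ if (i) $\rho$ is constant on the minimal elements, (ii) $x\preceq y$ implies $\rho(x)\le\rho(y)$, and (iii) whenever $y$ covers $x$ (i.e., $x\preceq y$, $x\ne y$, and there is no $z\notin\{x,y\}$ with $x\preceq z\preceq y$) we have $\rho(y)=\rho(x)+1$. *)

theory Defs
  imports Complex_Main
begin

text \<open>A simple game on N = {1..n} is a predicate on coalitions; we fix the convention
that coalitions not contained in {1..n} are losing, so that each game on N has a
unique representative.\<close>

type_synonym game = "nat set \<Rightarrow> bool"

definition simple_game :: "nat \<Rightarrow> game \<Rightarrow> bool" where
  "simple_game n v \<longleftrightarrow> (\<forall>S. \<not> S \<subseteq> {1..n} \<longrightarrow> \<not> v S)"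

definition weighted_game :: "nat \<Rightarrow> game \<Rightarrow> bool" where
  "weighted_game n v \<longleftrightarrow> simple_game n v \<and>
     (\<exists>(q::real) (w::nat \<Rightarrow> real). q \<ge> 0 \<and> (\<forall>i\<in>{1..n}. w i \<ge> 0) \<and>
        (\<forall>S. S \<subseteq> {1..n} \<longrightarrow> (v S \<longleftrightarrow> (\<Sum>i\<in>S. w i) \<ge> q)))"

definition desirable :: "nat \<Rightarrow> game \<Rightarrow> nat \<Rightarrow> nat \<Rightarrow> bool" where
  "desirable n v i j \<longleftrightarrow>
     (\<forall>S. S \<subseteq> {1..n} - {i, j} \<longrightarrow> (v (insert j S) \<longrightarrow> v (insert i S)))"

definition cwvg :: "nat \<Rightarrow> game set" where
  "cwvg n = {v. weighted_game n v \<and> (\<forall>i. 1 \<le> i \<and> i < n \<longrightarrow> desirable n v i (Suc i))}"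

definition wmin :: "nat \<Rightarrow> game \<Rightarrow> nat set set" where
  "wmin n v = {S. S \<subseteq> {1..n} \<and> v S \<and> (\<forall>i\<in>S. \<not> v (S - {i}))}"

definition mwc_step :: "nat \<Rightarrow> game \<Rightarrow> game \<Rightarrow> bool" where
  "mwc_step n G G' \<longleftrightarrow> G \<in> cwvg n \<and> G' \<in> cwvg n \<and>
     wmin n G \<subset> wmin n G' \<and> card (wmin n G') = card (wmin n G) + 1"

definition mwc_rel :: "nat \<Rightarrow> (game \<times> game) set" where
  "mwc_rel n = {(G, G'). G \<in> cwvg n \<and> G' \<in> cwvg n \<and> (mwc_step n)\<^sup>*\<^sup>* G G'}"

definition minimal_in :: "'a set \<Rightarrow> ('a \<times> 'a) set \<Rightarrow> 'a \<Rightarrow> bool" where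
  "minimal_in A r x \<longleftrightarrow> x \<in> A \<and> (\<forall>y\<in>A. (y, x) \<in> r \<longrightarrow> y = x)"

definition covers :: "('a \<times> 'a) set \<Rightarrow> 'a \<Rightarrow> 'a \<Rightarrow> bool" where
  "covers r x y \<longleftrightarrow> (x, y) \<in> r \<and> x \<noteq> y \<and>
     \<not> (\<exists>z. z \<notin> {x, y} \<and> (x, z) \<in> r \<and> (z, y) \<in> r)"

definition graded_poset :: "'a set \<Rightarrow> ('a \<times> 'a) set \<Rightarrow> ('a \<Rightarrow> nat) \<Rightarrow> bool" where
  "graded_poset A r \<rho> \<longleftrightarrow> partial_order_on A r \<and>
     (\<forall>x y. minimal_in A r x \<and> minimal_in A r y \<longrightarrow> \<rho> x = \<rho> y) \<and>
     (\<forall>x y. (x, y) \<in> r \<longrightarrow> \<rho> x \<le> \<rho> y) \<and>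
     (\<forall>x y. covers r x y \<longrightarrow> \<rho> y = \<rho> x + 1)"

end

(*
  Every MWC step adds exactly one minimal winning coalition, so |W_min| increases by one along
  steps; this makes the reflexive-transitive closure antisymmetric, and a cover is a single step.
  The substance is that the game with no winning coalition lies below every canonical weighted
  game G, i.e. a single minimal winning coalition can always be removed. Choose weights that are
  non-increasing in the player index, let m be the largest player in a minimal winning coalition
  (the players above m are null), and let S be the lightest winning coalition containing m, ties
  broken by fewer members and then by larger index sum. Declaring losing the coalitions T with
  T \<inter> {1..m} = S removes S, and only S, from W_min. The tie-breaks keep the new game canonical, and
  raising the weights of the players in {1..m} outside S by a small epsilon while lowering the
  weight of m by the slack of S over the quota gives it a weighted representation.
*)
theory Submission
  imports Defs "HOL-Combinatorics.Permutations" "HOL-Library.Product_Lexorder"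
begin

section \<open>Graded posets generated by a rank-increasing step relation\<close>

lemma rtranclp_rank_less:
  fixes \<rho> :: "'a \<Rightarrow> nat"
  assumes step: "\<And>x y. P x y \<Longrightarrow> \<rho> x < \<rho> y" and "P\<^sup>*\<^sup>* x y" "x \<noteq> y"
  shows "\<rho> x < \<rho> y"
  using assms(2,3)
proof (induction rule: rtranclp_induct)
  case (step y z)
  then show ?case
    using assms(1) by (cases "x = y") (auto dest: order.strict_trans)
qed simp

lemma graded_poset_rtranclp:
  fixes P :: "'a \<Rightarrow> 'a \<Rightarrow> bool" and \<rho> :: "'a \<Rightarrow> nat"
  assumes step: "\<And>x y. P x y \<Longrightarrow> x \<in> A \<and> y \<in> A \<and> \<rho> y = \<rho> x + 1"
    and least: "x0 \<in> A" "\<And>x. x \<in> A \<Longrightarrow> P\<^sup>*\<^sup>* x0 x"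
  shows "graded_poset A {(x, y). x \<in> A \<and> y \<in> A \<and> P\<^sup>*\<^sup>* x y} \<rho>"
proof -
  define r where "r = {(x, y). x \<in> A \<and> y \<in> A \<and> P\<^sup>*\<^sup>* x y}"
  have less: "\<rho> x < \<rho> y" if "P\<^sup>*\<^sup>* x y" "x \<noteq> y" for x y
    using rtranclp_rank_less[of P \<rho>] step that by fastforce
  have "preorder_on A r"
    unfolding preorder_on_def refl_on_def trans_def r_def by (auto intro: rtranclp_trans)
  moreover have "antisym r"
    unfolding antisym_def r_def using less
    by (metis (no_types, lifting) case_prodD less_asym mem_Collect_eq)
  ultimately have "partial_order_on A r" unfolding partial_order_on_def by blast
  moreover have "x = x0" if "minimal_in A r x" for x
    using that least unfolding minimal_in_def r_def by blast
  moreover have "\<rho> x \<le> \<rho> y" if "(x, y) \<in> r" for x y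
    using that less unfolding r_def by fastforce
  moreover have "\<rho> y = \<rho> x + 1" if "covers r x y" for x y
  proof -
    have "P\<^sup>*\<^sup>* x y" "x \<noteq> y" "y \<in> A"
      and between: "\<And>z. (x, z) \<in> r \<Longrightarrow> (z, y) \<in> r \<Longrightarrow> z \<in> {x, y}"
      using that unfolding covers_def r_def by blast+
    then obtain z where xz: "P x z" and zy: "P\<^sup>*\<^sup>* z y"
      by (metis converse_rtranclpE)
    have "(x, z) \<in> r" "(z, y) \<in> r"
      using xz zy step[OF xz] \<open>y \<in> A\<close> unfolding r_def by auto
    with between step[OF xz] have "z = y" by force
    with step[OF xz] show ?thesis by simp
  qed
  ultimately show ?thesis
    unfolding graded_poset_def r_def by blast
qed

lemma obtain_least_finite:
  fixes f :: "'a \<Rightarrow> 'b :: linorder"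
  assumes "finite A" "x \<in> A"
  obtains y where "y \<in> A" "\<And>z. z \<in> A \<Longrightarrow> f y \<le> f z"
  using ex_is_arg_min_if_finite[of A f] assms unfolding is_arg_min_linorder by blast

lemma finite_separated_gap:
  fixes A B :: "real set"
  assumes "finite A" "finite B" "\<And>x y. x \<in> A \<Longrightarrow> y \<in> B \<Longrightarrow> x < y"
  obtains \<delta> where "\<delta> > 0" "\<And>x y. x \<in> A \<Longrightarrow> y \<in> B \<Longrightarrow> x + \<delta> \<le> y"
proof (cases "A \<times> B = {}")
  case True
  then show ?thesis using that[of 1] by auto
next
  case False
  define D where "D = (\<lambda>(x, y). y - x) ` (A \<times> B)"
  have "finite D" "D \<noteq> {}"
    using assms False unfolding D_def by auto
  then have "Min D > 0"
    using assms(3) unfolding D_def by (auto simp: Min_gr_iff)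
  moreover have "x + Min D \<le> y" if "x \<in> A" "y \<in> B" for x y
  proof -
    have "Min D \<le> y - x"
      using \<open>finite D\<close> by (rule Min_le) (use that in \<open>force simp: D_def\<close>)
    then show ?thesis by simp
  qed
  ultimately show ?thesis by (rule that)
qed

lemma lex_triple_le_iff:
  fixes a a' :: "'a :: linorder" and b b' :: "'b :: linorder" and c c' :: "'c :: linorder"
  shows "(a, b, c) \<le> (a', b', c') \<longleftrightarrow> a < a' \<or> a = a' \<and> (b < b' \<or> b = b' \<and> c \<le> c')"
  by (auto simp: less_eq_prod_def)

lemma antimono_onI_Suc:
  fixes f :: "nat \<Rightarrow> 'b :: preorder"
  assumes "\<And>i. a \<le> i \<Longrightarrow> i < b \<Longrightarrow> f (Suc i) \<le> f i"
  shows "antimono_on {a..b} f"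
proof (rule monotone_onI)
  fix i j assume "i \<in> {a..b}" "j \<in> {a..b}" "i \<le> j"
  from \<open>i \<le> j\<close> show "f j \<le> f i"
  proof (induction j rule: dec_induct)
    case (step k)
    then show ?case
      using assms[of k] \<open>i \<in> {a..b}\<close> \<open>j \<in> {a..b}\<close> by (auto intro: order.trans)
  qed simp
qed

lemma sum_index_weighted_transpose_less:
  fixes u :: "nat \<Rightarrow> real"
  assumes "finite N" "k \<in> N" "Suc k \<in> N" "u k < u (Suc k)"
  shows "(\<Sum>i\<in>N. real i * u (transpose k (Suc k) i)) < (\<Sum>i\<in>N. real i * u i)"
proof -
  let ?R = "N - {k, Suc k}"
  have split: "(\<Sum>i\<in>N. real i * f i)
      = (\<Sum>i\<in>?R. real i * f i) + (real k * f k + real (Suc k) * f (Suc k))" for f :: "nat \<Rightarrow> real"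
    using assms(1-3) sum.subset_diff[of "{k, Suc k}" N "\<lambda>i. real i * f i"] by simp
  have "(\<Sum>i\<in>?R. real i * u (transpose k (Suc k) i)) = (\<Sum>i\<in>?R. real i * u i)"
    by (rule sum.cong) auto
  moreover have
    "real k * u (Suc k) + real (Suc k) * u k < real k * u k + real (Suc k) * u (Suc k)"
    using assms(4) by (simp add: algebra_simps)
  ultimately show ?thesis
    using split[of "\<lambda>i. u (transpose k (Suc k) i)"] split[of u] by simp
qed

section \<open>Weighted representations of canonical games\<close>

definition weighted_rep :: "nat \<Rightarrow> game \<Rightarrow> real \<Rightarrow> (nat \<Rightarrow> real) \<Rightarrow> bool" where
  "weighted_rep n v q w \<longleftrightarrow>
     q \<ge> 0 \<and> (\<forall>i\<in>{1..n}. w i \<ge> 0) \<and> (\<forall>S \<subseteq> {1..n}. v S \<longleftrightarrow> q \<le> sum w S)"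

lemma weighted_game_iff: "weighted_game n v \<longleftrightarrow> simple_game n v \<and> (\<exists>q w. weighted_rep n v q w)"
  unfolding weighted_game_def weighted_rep_def by auto

lemma weighted_repD:
  assumes "weighted_rep n v q w"
  shows "0 \<le> q" "i \<in> {1..n} \<Longrightarrow> 0 \<le> w i" "S \<subseteq> {1..n} \<Longrightarrow> v S \<longleftrightarrow> q \<le> sum w S"
  using assms unfolding weighted_rep_def by auto

lemma weighted_rep_mono:
  assumes rep: "weighted_rep n v q w" and "S \<subseteq> T" "T \<subseteq> {1..n}" "v S"
  shows "v T"
proof -
  have "sum w S \<le> sum w T"
    using assms(2,3) weighted_repD(2)[OF rep] by (intro sum_mono2) (auto intro: finite_subset)
  with assms show ?thesis
    using weighted_repD(3)[OF rep] by (meson order.trans subset_trans)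
qed

lemma desirable_if_weight_le:
  assumes rep: "weighted_rep n v q w" and "i \<in> {1..n}" "j \<in> {1..n}" "w j \<le> w i"
  shows "desirable n v i j"
  unfolding desirable_def
proof (intro allI impI)
  fix S assume S: "S \<subseteq> {1..n} - {i, j}" and "v (insert j S)"
  have "finite S" "i \<notin> S" "j \<notin> S" using S by (auto intro: finite_subset)
  have "q \<le> sum w (insert j S)"
    using \<open>v (insert j S)\<close> weighted_repD(3)[OF rep, of "insert j S"] S assms(3) by auto
  also have "\<dots> \<le> sum w (insert i S)"
    using \<open>finite S\<close> \<open>i \<notin> S\<close> \<open>j \<notin> S\<close> assms(4) by simp
  finally show "v (insert i S)"
    using weighted_repD(3)[OF rep, of "insert i S"] S assms(2) by auto
qed

lemma weighted_rep_transpose: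
  assumes rep: "weighted_rep n v q w" and ij: "i \<in> {1..n}" "j \<in> {1..n}"
    and "desirable n v i j" "desirable n v j i"
  shows "weighted_rep n v q (w \<circ> transpose i j)"
proof -
  have sym: "v (insert i T) \<longleftrightarrow> v (insert j T)" if "T \<subseteq> {1..n} - {i, j}" for T
    using assms(4,5) that unfolding desirable_def by (metis insert_commute)
  have swap: "v (transpose i j ` S) \<longleftrightarrow> v S" if "S \<subseteq> {1..n}" for S
  proof -
    consider "i \<in> S \<longleftrightarrow> j \<in> S" | "i \<in> S" "j \<notin> S" | "j \<in> S" "i \<notin> S" by blast
    then show ?thesis
    proof cases
      case 2
      then have "transpose i j ` (S - {i}) = S - {i}" by simp
      then have "transpose i j ` S = insert j (S - {i})"
        using 2 by (metis image_insert insert_Diff transpose_apply_first)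
      moreover have "S - {i} \<subseteq> {1..n} - {i, j}" using that 2 by auto
      ultimately show ?thesis using sym[of "S - {i}"] 2 by (simp add: insert_absorb)
    next
      case 3
      then have "transpose i j ` (S - {j}) = S - {j}" by simp
      then have "transpose i j ` S = insert i (S - {j})"
        using 3 by (metis image_insert insert_Diff transpose_apply_second)
      moreover have "S - {j} \<subseteq> {1..n} - {i, j}" using that 3 by auto
      ultimately show ?thesis using sym[of "S - {j}"] 3 by (simp add: insert_absorb)
    qed simp
  qed
  show ?thesis
    unfolding weighted_rep_def
  proof (intro conjI ballI allI impI)
    show "0 \<le> q" using weighted_repD(1)[OF rep] .
  next
    fix x assume "x \<in> {1..n}"
    then show "0 \<le> (w \<circ> transpose i j) x"
      using ij weighted_repD(2)[OF rep] by (simp add: transpose_def)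
  next
    fix S assume S: "S \<subseteq> {1..n}"
    then have "transpose i j ` S \<subseteq> {1..n}" using ij by (auto simp: transpose_def)
    then show "v S \<longleftrightarrow> q \<le> sum (w \<circ> transpose i j) S"
      using swap[OF S] weighted_repD(3)[OF rep] by (simp add: sum.reindex)
  qed
qed

lemma cwvgD:
  assumes "G \<in> cwvg n"
  shows "simple_game n G" "\<exists>q w. weighted_rep n G q w"
    "1 \<le> i \<Longrightarrow> i < n \<Longrightarrow> desirable n G i (Suc i)"
  using assms unfolding cwvg_def weighted_game_iff by auto

text \<open>A representation minimising the index-weighted total weight cannot increase at an
  adjacent pair k, k+1: the two players are then symmetric, and exchanging their weights
  gives a representation of smaller total.\<close>

lemma cwvg_antimono_rep:
  assumes G: "G \<in> cwvg n"
  obtains q w where "weighted_rep n G q w" "antimono_on {1..n} w"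
proof -
  obtain q w0 where rep0: "weighted_rep n G q w0" using cwvgD(2)[OF G] by blast
  define R where "R = {\<pi>. \<pi> permutes {1..n} \<and> weighted_rep n G q (w0 \<circ> \<pi>)}"
  define \<Phi> where "\<Phi> \<pi> = (\<Sum>i\<in>{1..n}. real i * w0 (\<pi> i))" for \<pi>
  have "finite R"
    unfolding R_def by (rule finite_subset[OF _ finite_permutations[of "{1..n}"]]) auto
  moreover have "id \<in> R" using rep0 unfolding R_def by (simp add: permutes_id)
  ultimately obtain \<pi> where \<pi>: "\<pi> \<in> R" and least: "\<And>\<sigma>. \<sigma> \<in> R \<Longrightarrow> \<Phi> \<pi> \<le> \<Phi> \<sigma>"
    using obtain_least_finite[where f = \<Phi>] by blast
  have rep: "weighted_rep n G q (w0 \<circ> \<pi>)" using \<pi> unfolding R_def by simp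
  have "(w0 \<circ> \<pi>) (Suc k) \<le> (w0 \<circ> \<pi>) k" if k: "1 \<le> k" "k < n" for k
  proof (rule ccontr)
    assume "\<not> ?thesis"
    then have less: "(w0 \<circ> \<pi>) k < (w0 \<circ> \<pi>) (Suc k)" by simp
    define \<sigma> where "\<sigma> = \<pi> \<circ> transpose k (Suc k)"
    have kN: "k \<in> {1..n}" "Suc k \<in> {1..n}" using k by auto
    have "weighted_rep n G q ((w0 \<circ> \<pi>) \<circ> transpose k (Suc k))"
      using weighted_rep_transpose[OF rep kN cwvgD(3)[OF G k]]
        desirable_if_weight_le[OF rep kN(2,1)] less by simp
    moreover have "\<sigma> permutes {1..n}"
      using \<pi> kN unfolding \<sigma>_def R_def by (simp add: permutes_compose permutes_swap_id)
    ultimately have "\<sigma> \<in> R" unfolding R_def \<sigma>_def by (simp add: o_assoc)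
    moreover have "\<Phi> \<sigma> < \<Phi> \<pi>"
      using sum_index_weighted_transpose_less[of "{1..n}" k "w0 \<circ> \<pi>"] kN less
      unfolding \<Phi>_def \<sigma>_def by simp
    ultimately show False using least[of \<sigma>] by simp
  qed
  then have "antimono_on {1..n} (w0 \<circ> \<pi>)" by (intro antimono_onI_Suc) auto
  with rep show ?thesis by (rule that)
qed

lemma finite_wmin: "finite (wmin n v)"
  by (rule finite_subset[of _ "Pow {1..n}"]) (auto simp: wmin_def)

lemma exists_wmin_subset:
  assumes "T \<subseteq> {1..n}" "v T"
  obtains M where "M \<in> wmin n v" "M \<subseteq> T"
proof -
  define C where "C = {X. X \<subseteq> T \<and> v X}"
  have "finite T" using assms(1) by (rule finite_subset) simp
  then have "finite C" unfolding C_def by simp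
  moreover have "T \<in> C" using assms unfolding C_def by simp
  ultimately obtain M where M: "M \<in> C" and least: "\<And>X. X \<in> C \<Longrightarrow> card M \<le> card X"
    using obtain_least_finite[where f = card] by blast
  have "finite M" using M \<open>finite T\<close> unfolding C_def by (auto intro: finite_subset)
  have "\<not> v (M - {i})" if "i \<in> M" for i
    using least[of "M - {i}"] M card_Diff1_less[OF \<open>finite M\<close> that] unfolding C_def by auto
  then have "M \<in> wmin n v" using M assms(1) unfolding C_def wmin_def by auto
  with M show ?thesis using that unfolding C_def by blast
qed

lemma empty_game_cwvg: "(\<lambda>_. False) \<in> cwvg n"
proof -
  have "weighted_rep n (\<lambda>_. False) 1 (\<lambda>_. 0)" unfolding weighted_rep_def by simp
  then have "weighted_game n (\<lambda>_. False)" unfolding weighted_game_iff simple_game_def by blast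
  then show ?thesis unfolding cwvg_def desirable_def by simp
qed

lemma wmin_empty_game: "wmin n (\<lambda>_. False) = {}"
  unfolding wmin_def by simp

lemma mwc_step_empty_game:
  assumes G: "G \<in> cwvg n" and "G {}"
  shows "mwc_step n (\<lambda>_. False) G"
proof -
  obtain q w where rep: "weighted_rep n G q w" using cwvgD(2)[OF G] by blast
  have all: "G X" if "X \<subseteq> {1..n}" for X
    using weighted_rep_mono[OF rep _ that \<open>G {}\<close>] by simp
  have "wmin n G = {{}}"
  proof (intro equalityI subsetI)
    fix X assume "X \<in> wmin n G"
    then have "X \<subseteq> {1..n}" "\<And>i. i \<in> X \<Longrightarrow> \<not> G (X - {i})" unfolding wmin_def by auto
    then show "X \<in> {{}}" using all by blast
  qed (use \<open>G {}\<close> in \<open>simp add: wmin_def\<close>)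
  then show ?thesis
    unfolding mwc_step_def using G empty_game_cwvg wmin_empty_game by auto
qed

section \<open>Removing one minimal winning coalition\<close>

locale mwc_removal =
  fixes n :: nat and G :: game and q :: real and w :: "nat \<Rightarrow> real" and m :: nat
    and S :: "nat set"
  assumes canonical: "G \<in> cwvg n"
    and rep: "weighted_rep n G q w"
    and antimono: "antimono_on {1..n} w"
    and mwc_le_m: "\<And>M i. M \<in> wmin n G \<Longrightarrow> i \<in> M \<Longrightarrow> i \<le> m"
    and m_in_mwc: "m \<in> \<Union>(wmin n G)"
    and S_winning: "S \<subseteq> {1..n}" "G S" "m \<in> S"
    and S_lex_least: "\<And>T. T \<subseteq> {1..n} \<Longrightarrow> G T \<Longrightarrow> m \<in> T \<Longrightarrow>
      (sum w S, card S, - int (\<Sum>S)) \<le> (sum w T, card T, - int (\<Sum>T))"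
begin

lemma winning_mono: "X \<subseteq> Y \<Longrightarrow> Y \<subseteq> {1..n} \<Longrightarrow> G X \<Longrightarrow> G Y"
  using weighted_rep_mono[OF rep] by blast

lemma losing_weight_less:
  assumes "T \<subseteq> {1..n}" "\<not> G T"
  shows "sum w T < q"
  using weighted_repD(3)[OF rep assms(1)] assms(2) by simp

lemma winning_iff_restrict:
  assumes T: "T \<subseteq> {1..n}"
  shows "G (T \<inter> {..m}) \<longleftrightarrow> G T"
proof
  assume "G T"
  then obtain M where "M \<in> wmin n G" "M \<subseteq> T" by (rule exists_wmin_subset[OF T])
  then have "M \<subseteq> T \<inter> {..m}" "G M" using mwc_le_m unfolding wmin_def by auto
  then show "G (T \<inter> {..m})" using T winning_mono by blast
qed (use T winning_mono in blast)

lemma m_range: "m \<in> {1..n}"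
  using m_in_mwc unfolding wmin_def by auto

lemma S_min_weight:
  assumes "T \<subseteq> {1..n}" "G T" "m \<in> T"
  shows "sum w S \<le> sum w T"
  using S_lex_least[OF assms] unfolding lex_triple_le_iff by auto

lemma S_min_card:
  assumes "T \<subseteq> {1..n}" "G T" "m \<in> T" "sum w T = sum w S"
  shows "card S \<le> card T"
  using S_lex_least[OF assms(1-3)] assms(4) unfolding lex_triple_le_iff by auto

lemma S_max_index:
  assumes "T \<subseteq> {1..n}" "G T" "m \<in> T" "sum w T = sum w S" "card T = card S"
  shows "\<Sum>T \<le> \<Sum>S"
proof -
  have "- int (\<Sum>S) \<le> - int (\<Sum>T)"
    using S_lex_least[OF assms(1-3)] assms(4,5) unfolding lex_triple_le_iff by auto
  then show ?thesis by (metis neg_le_iff_le of_nat_le_iff)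
qed

lemma weight_m_bound:
  assumes "\<And>T. T \<subseteq> {1..n} \<Longrightarrow> \<not> G T \<Longrightarrow> sum w T + d < q"
  shows "sum w S - q + d < w m"
proof -
  obtain M where M: "M \<in> wmin n G" "m \<in> M" using m_in_mwc by blast
  then have "M \<subseteq> {1..n}" "G M" "\<not> G (M - {m})" unfolding wmin_def by auto
  moreover from this have "finite M" by (auto intro: finite_subset)
  ultimately have "sum w (M - {m}) + d < q" "sum w M = w m + sum w (M - {m})"
    using assms[of "M - {m}"] sum.remove[OF _ M(2)] by auto
  moreover have "sum w S \<le> sum w M" using S_min_weight \<open>M \<subseteq> {1..n}\<close> \<open>G M\<close> M(2) by blast
  ultimately show ?thesis by linarith
qed

lemma S_wmin: "S \<in> wmin n G"
proof -
  have fin: "finite S" using S_winning(1) by (auto intro: finite_subset)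
  have "\<not> G (S - {j})" if j: "j \<in> S" for j
  proof (cases "j = m")
    case True
    have "sum w S - q < w m"
      using weight_m_bound[of 0] losing_weight_less by simp
    then have "sum w (S - {m}) < q" using sum.remove[OF fin S_winning(3), of w] by linarith
    then show ?thesis using True weighted_repD(3)[OF rep, of "S - {m}"] S_winning(1) by auto
  next
    case False
    show ?thesis
    proof
      assume win: "G (S - {j})"
      have Sj: "S - {j} \<subseteq> {1..n}" "m \<in> S - {j}" using S_winning False by auto
      have "sum w (S - {j}) \<le> sum w S"
        using sum.remove[OF fin j, of w] weighted_repD(2)[OF rep, of j] j S_winning(1) by auto
      then have "sum w (S - {j}) = sum w S"
        using S_min_weight[OF Sj(1) win Sj(2)] by simp
      then have "card S \<le> card (S - {j})"
        using S_min_card[OF Sj(1) win Sj(2)] by simp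
      with card_Diff1_less[OF fin j] show False by simp
    qed
  qed
  with S_winning show ?thesis unfolding wmin_def by auto
qed

lemma S_subset_m: "S \<subseteq> {..m}"
  using mwc_le_m[OF S_wmin] by auto

lemma exchange_m_winning:
  assumes "i \<in> {1..n}" "i \<le> m" "i \<notin> S"
  shows "G (insert i (S - {m}))"
proof -
  have fin: "finite S" using S_winning(1) by (auto intro: finite_subset)
  have "w m \<le> w i" using monotone_onD[OF antimono, of i m] assms m_range by simp
  have "q \<le> sum w S" using S_winning weighted_repD(3)[OF rep] by blast
  also have "\<dots> = w m + sum w (S - {m})" by (rule sum.remove[OF fin S_winning(3)])
  also have "\<dots> \<le> sum w (insert i (S - {m}))" using fin assms(3) \<open>w m \<le> w i\<close> by simp
  finally have "q \<le> sum w (insert i (S - {m}))" .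
  moreover have "insert i (S - {m}) \<subseteq> {1..n}" using assms(1) S_winning(1) by auto
  ultimately show ?thesis using weighted_repD(3)[OF rep] by simp
qed

lemma shift_S_losing:
  assumes "i \<in> S" "i \<noteq> m" "Suc i \<in> {1..n}" "Suc i \<notin> S"
  shows "\<not> G (insert (Suc i) (S - {i}))"
proof
  define S' where "S' = insert (Suc i) (S - {i})"
  assume "G (insert (Suc i) (S - {i}))"
  then have S': "S' \<subseteq> {1..n}" "G S'" "m \<in> S'"
    using assms S_winning unfolding S'_def by auto
  have fin: "finite S" using S_winning(1) by (auto intro: finite_subset)
  have "w (Suc i) \<le> w i" using monotone_onD[OF antimono, of i "Suc i"] assms S_winning(1) by auto
  then have "sum w S' \<le> sum w S"
    using fin assms sum.remove[OF fin assms(1), of w] unfolding S'_def by simp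
  then have "sum w S' = sum w S" using S_min_weight[OF S'] by simp
  moreover have "card S' = card S"
    using fin assms card_Suc_Diff1[OF fin assms(1)] unfolding S'_def by simp
  moreover have "\<Sum>S < \<Sum>S'"
    using fin assms sum.remove[OF fin assms(1), of "\<lambda>x. x"] unfolding S'_def by simp
  ultimately show False using S_max_index[OF S'] by simp
qed

definition reduced :: game where
  "reduced T \<longleftrightarrow> G T \<and> T \<inter> {..m} \<noteq> S"

lemma reduced_iff: "T \<subseteq> {1..n} \<Longrightarrow> reduced T \<longleftrightarrow> G (T \<inter> {..m}) \<and> T \<inter> {..m} \<noteq> S"
  using winning_iff_restrict unfolding reduced_def by simp

lemma wmin_reduced: "wmin n reduced = wmin n G - {S}"
proof
  show "wmin n G - {S} \<subseteq> wmin n reduced"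
  proof
    fix X assume X: "X \<in> wmin n G - {S}"
    then have "X \<inter> {..m} = X" using mwc_le_m by auto
    with X show "X \<in> wmin n reduced" unfolding wmin_def reduced_def by auto
  qed
next
  show "wmin n reduced \<subseteq> wmin n G - {S}"
  proof
    fix X assume X: "X \<in> wmin n reduced"
    then have XN: "X \<subseteq> {1..n}" and "G X" and XS: "X \<inter> {..m} \<noteq> S"
      and min: "\<And>i. i \<in> X \<Longrightarrow> \<not> reduced (X - {i})"
      unfolding wmin_def reduced_def by auto
    have "\<not> G (X - {i})" if i: "i \<in> X" for i
    proof
      assume win: "G (X - {i})"
      then have Xi: "(X - {i}) \<inter> {..m} = S" using min[OF i] unfolding reduced_def by simp
      show False
      proof (cases "m < i")
        case True
        then show False using Xi XS by auto
      next
        case False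
        then have "i < m" "i \<notin> S" using Xi S_winning(3) by auto
        then have "X \<inter> {..m} = insert i S" "m \<in> X" using Xi i S_winning(3) by auto
        then have "insert i (S - {m}) \<subseteq> X - {m}" using \<open>i < m\<close> by auto
        moreover have "G (insert i (S - {m}))"
          using exchange_m_winning i XN \<open>i < m\<close> \<open>i \<notin> S\<close> by auto
        ultimately have "G (X - {m})" using winning_mono XN by blast
        moreover have "i \<in> (X - {m}) \<inter> {..m}" using i \<open>i < m\<close> by auto
        ultimately have "reduced (X - {m})" using \<open>i \<notin> S\<close> unfolding reduced_def by auto
        with min[OF \<open>m \<in> X\<close>] show False by simp
      qed
    qed
    moreover have "X \<noteq> S" using XS S_subset_m by auto
    ultimately show "X \<in> wmin n G - {S}" using XN \<open>G X\<close> unfolding wmin_def by auto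
  qed
qed

lemma desirable_reduced:
  assumes i: "1 \<le> i" "i < n"
  shows "desirable n reduced i (Suc i)"
  unfolding desirable_def
proof (intro allI impI)
  fix T assume T: "T \<subseteq> {1..n} - {i, Suc i}" and win: "reduced (insert (Suc i) T)"
  then have "G (insert i T)"
    using cwvgD(3)[OF canonical i] unfolding desirable_def reduced_def by blast
  moreover have "insert i T \<inter> {..m} \<noteq> S"
  proof
    assume eq: "insert i T \<inter> {..m} = S"
    have TN: "insert (Suc i) T \<subseteq> {1..n}" using T i by auto
    consider "m < i" | "i = m" | "i < m" by linarith
    then show False
    proof cases
      case 1
      then have "insert (Suc i) T \<inter> {..m} = S" using eq by auto
      then show False using win unfolding reduced_def by simp
    next
      case 2
      then have "insert (Suc i) T \<inter> {..m} = S - {m}" using eq T by auto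
      then show False
        using win reduced_iff[OF TN] S_wmin S_winning(3) unfolding wmin_def by auto
    next
      case 3
      then have "insert (Suc i) T \<inter> {..m} = insert (Suc i) (S - {i})"
        "i \<in> S" "Suc i \<notin> S"
        using eq T by auto
      then show False
        using win reduced_iff[OF TN] shift_S_losing[of i] \<open>i < m\<close> i by auto
    qed
  qed
  ultimately show "reduced (insert i T)" unfolding reduced_def by simp
qed

text \<open>Raising the players up to m outside S by \<open>\<epsilon>\<close> makes S the strictly lightest winning
  coalition through m; lowering m by the slack of S over the quota plus \<open>\<epsilon>/2\<close> then makes
  exactly the coalitions restricting to S losing.\<close>

definition perturbed :: "real \<Rightarrow> nat \<Rightarrow> real" where
  "perturbed \<epsilon> i =
     (if m < i then 0
      else w i + (if i \<in> S then 0 else \<epsilon>) - (if i = m then sum w S - q + \<epsilon> / 2 else 0))"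

lemma sum_perturbed:
  assumes T: "T \<subseteq> {1..n}"
  shows "sum (perturbed \<epsilon>) T = sum w (T \<inter> {..m}) + \<epsilon> * card (T \<inter> {..m} - S)
           - (if m \<in> T then sum w S - q + \<epsilon> / 2 else 0)"
proof -
  have fin: "finite (T \<inter> {..m})" by simp
  have "sum (perturbed \<epsilon>) T = sum (perturbed \<epsilon>) (T \<inter> {..m})"
    using T by (intro sum.mono_neutral_right) (auto intro: finite_subset simp: perturbed_def)
  also have "\<dots> = sum w (T \<inter> {..m}) + (\<Sum>i\<in>T \<inter> {..m}. if i \<in> S then 0 else \<epsilon>)
      - (\<Sum>i\<in>T \<inter> {..m}. if i = m then sum w S - q + \<epsilon> / 2 else 0)"
    unfolding perturbed_def by (simp add: sum.distrib sum_subtractf)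
  also have "(\<Sum>i\<in>T \<inter> {..m}. if i \<in> S then 0 else \<epsilon>) = (\<Sum>i\<in>T \<inter> {..m} - S. \<epsilon>)"
    using fin by (intro sum.mono_neutral_cong_right) auto
  finally show ?thesis using fin by (simp add: sum.delta)
qed

lemma S_strictly_lightest:
  fixes \<epsilon> :: real
  assumes gap: "\<And>T. T \<subseteq> {1..n} \<Longrightarrow> G T \<Longrightarrow> m \<in> T \<Longrightarrow> sum w S < sum w T
      \<Longrightarrow> sum w S + \<epsilon> \<le> sum w T"
    and "0 \<le> \<epsilon>" and T: "T \<subseteq> {1..n}" "G T" "m \<in> T" "T \<noteq> S"
  shows "sum w S + \<epsilon> \<le> sum w T + \<epsilon> * card (T - S)"
proof (cases "sum w S < sum w T")
  case True
  moreover have "0 \<le> \<epsilon> * card (T - S)" using \<open>0 \<le> \<epsilon>\<close> by simp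
  ultimately show ?thesis using gap[OF T(1-3)] by linarith
next
  case False
  then have "sum w T = sum w S" using S_min_weight[OF T(1-3)] by simp
  then have "card S \<le> card T" using S_min_card[OF T(1-3)] by simp
  have fin: "finite S" "finite T" using S_winning(1) T(1) by (auto intro: finite_subset)
  have "\<not> T \<subseteq> S"
    using psubset_card_mono[OF fin(1), of T] \<open>card S \<le> card T\<close> T(4) by auto
  then have "1 \<le> card (T - S)" using fin by (simp add: Suc_le_eq card_gt_0_iff)
  then have "\<epsilon> \<le> \<epsilon> * card (T - S)"
    using \<open>0 \<le> \<epsilon>\<close> mult_left_mono[of 1 "real (card (T - S))" \<epsilon>] by simp
  then show ?thesis using \<open>sum w T = sum w S\<close> by simp
qed

lemma weighted_rep_perturbed:
  fixes \<epsilon> :: real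
  assumes "0 < \<epsilon>"
    and losing: "\<And>T. T \<subseteq> {1..n} \<Longrightarrow> \<not> G T \<Longrightarrow> sum w T + \<epsilon> * n < q"
    and gap: "\<And>T. T \<subseteq> {1..n} \<Longrightarrow> G T \<Longrightarrow> m \<in> T \<Longrightarrow> sum w S < sum w T
      \<Longrightarrow> sum w S + \<epsilon> \<le> sum w T"
  shows "weighted_rep n reduced q (perturbed \<epsilon>)"
proof -
  have "q \<le> sum w S" using S_winning weighted_repD(3)[OF rep] by blast
  have "reduced T \<longleftrightarrow> q \<le> sum (perturbed \<epsilon>) T" if T: "T \<subseteq> {1..n}" for T
  proof -
    define T' where "T' = T \<inter> {..m}"
    define k where "k = card (T' - S)"
    have T': "T' \<subseteq> {1..n}" using T unfolding T'_def by auto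
    have "k \<le> n"
      using card_mono[of "{1..n}" "T' - S"] T' unfolding k_def by auto
    then have "\<epsilon> * k \<le> \<epsilon> * n" using \<open>0 < \<epsilon>\<close> by simp
    have sum: "sum (perturbed \<epsilon>) T = sum w T' + \<epsilon> * k - (if m \<in> T' then sum w S - q + \<epsilon> / 2 else 0)"
      using sum_perturbed[OF T] unfolding T'_def k_def by simp
    consider "\<not> G T'" | "G T'" "m \<notin> T'" | "T' = S" | "G T'" "m \<in> T'" "T' \<noteq> S"
      by blast
    then show ?thesis
    proof cases
      case 1
      have "sum w T' + \<epsilon> * k < q" using losing[OF T' 1] \<open>\<epsilon> * k \<le> \<epsilon> * n\<close> by linarith
      moreover have "0 \<le> (if m \<in> T' then sum w S - q + \<epsilon> / 2 else 0)"
        using \<open>q \<le> sum w S\<close> \<open>0 < \<epsilon>\<close> by simp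
      ultimately have "sum (perturbed \<epsilon>) T < q" using sum by linarith
      then show ?thesis using reduced_iff[OF T] 1 unfolding T'_def by simp
    next
      case 2
      have "0 \<le> \<epsilon> * k" using \<open>0 < \<epsilon>\<close> by simp
      moreover have "q \<le> sum w T'" using weighted_repD(3)[OF rep T'] 2 by simp
      ultimately have "q \<le> sum (perturbed \<epsilon>) T" using sum 2 by simp
      moreover have "T' \<noteq> S" using 2 S_winning(3) by auto
      ultimately show ?thesis using reduced_iff[OF T] 2 unfolding T'_def by simp
    next
      case 3
      then show ?thesis
        using sum \<open>0 < \<epsilon>\<close> reduced_iff[OF T] S_winning(3) unfolding T'_def k_def by auto
    next
      case 4
      then show ?thesis
        using sum S_strictly_lightest[OF gap _ T' 4] \<open>0 < \<epsilon>\<close> reduced_iff[OF T]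
        unfolding T'_def k_def by auto
    qed
  qed
  moreover have "0 \<le> perturbed \<epsilon> i" if "i \<in> {1..n}" for i
  proof -
    have "\<epsilon> / 2 \<le> \<epsilon> * n" using \<open>0 < \<epsilon>\<close> m_range by (simp add: mult_le_cancel_left1)
    then have "sum w S - q + \<epsilon> / 2 < w m" using weight_m_bound[OF losing] by simp
    then show ?thesis
      using that weighted_repD(2)[OF rep] \<open>0 < \<epsilon>\<close> S_winning(3) unfolding perturbed_def by auto
  qed
  ultimately show ?thesis
    using weighted_repD(1)[OF rep] unfolding weighted_rep_def by blast
qed

lemma weighted_reduced: "weighted_game n reduced"
proof -
  let ?L = "sum w ` {T. T \<subseteq> {1..n} \<and> \<not> G T}"
  let ?H = "sum w ` {T. T \<subseteq> {1..n} \<and> G T \<and> m \<in> T \<and> sum w S < sum w T}"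
  have fin: "finite ?L" "finite ?H" "finite {q}" "finite {sum w S}" by simp_all
  have "x < y" if "x \<in> ?L" "y \<in> {q}" for x y using that losing_weight_less by auto
  from finite_separated_gap[OF fin(1,3) this]
  obtain \<delta> where "\<delta> > 0" and \<delta>: "\<And>x y. x \<in> ?L \<Longrightarrow> y \<in> {q} \<Longrightarrow> x + \<delta> \<le> y" by blast
  have "x < y" if "x \<in> {sum w S}" "y \<in> ?H" for x y using that by auto
  from finite_separated_gap[OF fin(4,2) this]
  obtain \<gamma> where "\<gamma> > 0" and \<gamma>: "\<And>x y. x \<in> {sum w S} \<Longrightarrow> y \<in> ?H \<Longrightarrow> x + \<gamma> \<le> y" by blast
  define \<epsilon> where "\<epsilon> = min \<gamma> \<delta> / (real n + 1)"
  have "0 < \<epsilon>" using \<open>\<gamma> > 0\<close> \<open>\<delta> > 0\<close> unfolding \<epsilon>_def by simp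
  have "\<epsilon> * (real n + 1) = min \<gamma> \<delta>" unfolding \<epsilon>_def by simp
  then have "\<epsilon> * n + \<epsilon> = min \<gamma> \<delta>" by (simp add: distrib_left)
  moreover have "0 \<le> \<epsilon> * n" "min \<gamma> \<delta> \<le> \<gamma>" "min \<gamma> \<delta> \<le> \<delta>" using \<open>0 < \<epsilon>\<close> by simp_all
  ultimately have "\<epsilon> * n < \<delta>" "\<epsilon> \<le> \<gamma>" using \<open>0 < \<epsilon>\<close> by linarith+
  have "sum w T + \<epsilon> * n < q" if "T \<subseteq> {1..n}" "\<not> G T" for T
    using \<delta>[of "sum w T" q] that \<open>\<epsilon> * n < \<delta>\<close> by auto
  moreover have "sum w S + \<epsilon> \<le> sum w T"
    if "T \<subseteq> {1..n}" "G T" "m \<in> T" "sum w S < sum w T" for T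
    using \<gamma>[of "sum w S" "sum w T"] that \<open>\<epsilon> \<le> \<gamma>\<close> by auto
  ultimately have "weighted_rep n reduced q (perturbed \<epsilon>)"
    by (rule weighted_rep_perturbed[OF \<open>0 < \<epsilon>\<close>])
  moreover have "simple_game n reduced"
    using cwvgD(1)[OF canonical] unfolding simple_game_def reduced_def by blast
  ultimately show ?thesis unfolding weighted_game_iff by blast
qed

lemma mwc_step_reduced: "mwc_step n reduced G"
proof -
  have "reduced \<in> cwvg n"
    using weighted_reduced desirable_reduced unfolding cwvg_def by blast
  then show ?thesis
    unfolding mwc_step_def wmin_reduced
    using canonical S_wmin card_Suc_Diff1[OF finite_wmin S_wmin] by auto
qed

end

section \<open>The poset of canonical weighted games\<close>

lemma cwvg_mwc_step_predecessor:
  assumes G: "G \<in> cwvg n" and "\<not> G {}" "G T"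
  obtains G' where "mwc_step n G' G"
proof -
  obtain q w where rep: "weighted_rep n G q w" and anti: "antimono_on {1..n} w"
    using cwvg_antimono_rep[OF G] .
  have "T \<subseteq> {1..n}" using cwvgD(1)[OF G] \<open>G T\<close> unfolding simple_game_def by blast
  then obtain M where M: "M \<in> wmin n G" "M \<subseteq> T" using \<open>G T\<close> by (rule exists_wmin_subset)
  then have "M \<noteq> {}" using \<open>\<not> G {}\<close> unfolding wmin_def by auto
  define m where "m = Max (\<Union>(wmin n G))"
  have fin: "finite (\<Union>(wmin n G))"
    using finite_wmin[of n G] by (auto simp: wmin_def intro: finite_subset)
  have m_in: "m \<in> \<Union>(wmin n G)"
    unfolding m_def using fin M \<open>M \<noteq> {}\<close> by (intro Max_in) auto
  have le_m: "i \<le> m" if "X \<in> wmin n G" "i \<in> X" for X i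
    unfolding m_def using fin that by (intro Max_ge) auto
  let ?W = "{X. X \<subseteq> {1..n} \<and> G X \<and> m \<in> X}"
  have "finite ?W" by simp
  moreover obtain M' where "M' \<in> wmin n G" "m \<in> M'" using m_in by blast
  then have "M' \<in> ?W" unfolding wmin_def by auto
  ultimately obtain S where S: "S \<in> ?W" and lex: "\<And>X. X \<in> ?W \<Longrightarrow>
      (sum w S, card S, - int (\<Sum>S)) \<le> (sum w X, card X, - int (\<Sum>X))"
    using obtain_least_finite[where f = "\<lambda>X. (sum w X, card X, - int (\<Sum>X))"] by blast
  interpret mwc_removal n G q w m S
    by unfold_locales (use G rep anti le_m m_in S lex in auto)
  show ?thesis using mwc_step_reduced by (rule that)
qed

lemma cwvg_reachable_from_empty_game:
  assumes "G \<in> cwvg n"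
  shows "(mwc_step n)\<^sup>*\<^sup>* (\<lambda>_. False) G"
  using assms
proof (induction "card (wmin n G)" arbitrary: G rule: less_induct)
  case less
  consider "G = (\<lambda>_. False)" | "G {}" | T where "\<not> G {}" "G T" by blast
  then show ?case
  proof cases
    case 2
    then show ?thesis using mwc_step_empty_game[OF less.prems] by simp
  next
    case 3
    then obtain G' where step: "mwc_step n G' G"
      using cwvg_mwc_step_predecessor[OF less.prems] by blast
    then have "card (wmin n G') < card (wmin n G)" "G' \<in> cwvg n"
      unfolding mwc_step_def by auto
    then have "(mwc_step n)\<^sup>*\<^sup>* (\<lambda>_. False) G'" by (rule less.hyps)
    with step show ?thesis by simp
  qed simp
qed

theorem theorem6:
  fixes n :: nat
  assumes "n \<ge> 1"
  shows "partial_order_on (cwvg n) (mwc_rel n)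
       \<and> graded_poset (cwvg n) (mwc_rel n) (\<lambda>G. card (wmin n G))
       \<and> (\<exists>G0\<in>cwvg n. (\<forall>G\<in>cwvg n. (G0, G) \<in> mwc_rel n) \<and> card (wmin n G0) = 0)"
proof -
  have step: "G \<in> cwvg n \<and> G' \<in> cwvg n \<and> card (wmin n G') = card (wmin n G) + 1"
    if "mwc_step n G G'" for G G'
    using that unfolding mwc_step_def by simp
  have "graded_poset (cwvg n) (mwc_rel n) (\<lambda>G. card (wmin n G))"
    unfolding mwc_rel_def
    using graded_poset_rtranclp[OF step empty_game_cwvg cwvg_reachable_from_empty_game] .
  moreover have "\<forall>G\<in>cwvg n. ((\<lambda>_. False), G) \<in> mwc_rel n"
    using empty_game_cwvg cwvg_reachable_from_empty_game unfolding mwc_rel_def by blast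
  ultimately show ?thesis
    using empty_game_cwvg wmin_empty_game unfolding graded_poset_def by auto
qed

end
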